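(* Let $(\Lambda,d)$ be a $k$-graph and let $p\in\mathbb{N}^k$. For each $n\in\mathbb{N}^k$ with $n\le p$ and all vertices $v,w$ of $p\Lambda$ (i.e. $v,w\in\Lambda^p$), there is at most one path $\lambda$ in $p\Lambda$ with $d_p(\lambda)=n$, $r_p(\lambda)=v$ and $s_p(\lambda)=w$.
   Context: A $k$-graph is a pair $(\Lambda,d)$ where $\Lambda$ is a countable category and $d:\Lambda\to\mathbb{N}^k$ is a functor satisfying the factorisation property: if $d(\lambda)=m+n$ then there are unique $\mu\in d^{-1}(m)$, $\nu\in d^{-1}(n)$ with $\lambda=\mu\nu$. $\Lambda^n:=d^{-1}(n)$. For $d(\lambda)=n$ and $l\le m\le n$, $\lambda(l,m)$ is the unique path of degree $m-l$ with $\lambda=\lambda(0,l)\lambda(l,m)\lambda(m,n)$. The dual $k$-graph $p\Lambda$ has paths $\{\lambda\in\Lambda:d(\lambda)\ge p\}$, vertices $\Lambda^p$, range $r_p(\lambda)=\lambda(0,p)$, source $s_p(\lambda)=\lambda(d(\lambda)-p,d(\lambda))$, composition $\lambda\circ_p\mu=\lambda\,\mu(p,d(\mu))$ when $s_p(\lambda)=r_p(\mu)$, and degree $d_p(\lambda)=d(\lambda)-p$. *)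

theory Defs
  imports Main "HOL-Library.Countable_Set"
begin

text \<open>Elements of N^k are represented as functions nat => nat vanishing from index k on;
  the order on them is the pointwise order (le_fun).\<close>
definition in_Nk :: "nat \<Rightarrow> (nat \<Rightarrow> nat) \<Rightarrow> bool" where
  "in_Nk k m \<longleftrightarrow> (\<forall>i\<ge>k. m i = 0)"

text \<open>A k-graph, presented as a (single-sorted) countable small category: Lam is the set of
  morphisms (paths), vertices/objects are identified with identity morphisms, r and s give
  the range and source (identity) morphisms, cmp lam mu is the composite lam mu (meaningful
  when s lam = r mu), and d is the degree functor into N^k.\<close>
definition kgraph ::
  "nat \<Rightarrow> 'a set \<Rightarrow> ('a \<Rightarrow> 'a) \<Rightarrow> ('a \<Rightarrow> 'a) \<Rightarrow> ('a \<Rightarrow> 'a \<Rightarrow> 'a)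
     \<Rightarrow> ('a \<Rightarrow> nat \<Rightarrow> nat) \<Rightarrow> bool" where
  "kgraph k Lam r s cmp d \<longleftrightarrow>
     countable Lam \<and>
     (\<forall>x\<in>Lam. r x \<in> Lam \<and> s x \<in> Lam) \<and>
     (\<forall>x\<in>Lam. r (r x) = r x \<and> s (r x) = r x \<and> r (s x) = s x \<and> s (s x) = s x) \<and>
     (\<forall>x\<in>Lam. cmp (r x) x = x \<and> cmp x (s x) = x) \<and>
     (\<forall>x\<in>Lam. \<forall>y\<in>Lam. s x = r y \<longrightarrow>
        cmp x y \<in> Lam \<and> r (cmp x y) = r x \<and> s (cmp x y) = s y) \<and>
     (\<forall>x\<in>Lam. \<forall>y\<in>Lam. \<forall>z\<in>Lam. s x = r y \<and> s y = r z \<longrightarrow>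
        cmp (cmp x y) z = cmp x (cmp y z)) \<and>
     (\<forall>x\<in>Lam. in_Nk k (d x)) \<and>
     (\<forall>x\<in>Lam. d (r x) = (\<lambda>i. 0) \<and> d (s x) = (\<lambda>i. 0)) \<and>
     (\<forall>x\<in>Lam. \<forall>y\<in>Lam. s x = r y \<longrightarrow> d (cmp x y) = (\<lambda>i. d x i + d y i)) \<and>
     (\<forall>x\<in>Lam. \<forall>m n. d x = (\<lambda>i. m i + n i) \<longrightarrow>
        (\<exists>!(mu, nu). mu \<in> Lam \<and> nu \<in> Lam \<and> d mu = m \<and> d nu = n \<and>
                      s mu = r nu \<and> x = cmp mu nu))"

definition seg ::
  "'a set \<Rightarrow> ('a \<Rightarrow> 'a) \<Rightarrow> ('a \<Rightarrow> 'a) \<Rightarrow> ('a \<Rightarrow> 'a \<Rightarrow> 'a) \<Rightarrow> ('a \<Rightarrow> nat \<Rightarrow> nat)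
     \<Rightarrow> 'a \<Rightarrow> (nat \<Rightarrow> nat) \<Rightarrow> (nat \<Rightarrow> nat) \<Rightarrow> 'a" where
  "seg Lam r s cmp d x l m = (THE nu. nu \<in> Lam \<and> d nu = (\<lambda>i. m i - l i) \<and>
     (\<exists>a b. a \<in> Lam \<and> b \<in> Lam \<and> d a = l \<and> d b = (\<lambda>i. d x i - m i) \<and>
            s a = r nu \<and> s nu = r b \<and> x = cmp a (cmp nu b)))"

definition dual_paths :: "'a set \<Rightarrow> ('a \<Rightarrow> nat \<Rightarrow> nat) \<Rightarrow> (nat \<Rightarrow> nat) \<Rightarrow> 'a set" where
  "dual_paths Lam d p = {x \<in> Lam. p \<le> d x}"

definition dual_vertices :: "'a set \<Rightarrow> ('a \<Rightarrow> nat \<Rightarrow> nat) \<Rightarrow> (nat \<Rightarrow> nat) \<Rightarrow> 'a set" where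
  "dual_vertices Lam d p = {x \<in> Lam. d x = p}"

definition dual_r ::
  "'a set \<Rightarrow> ('a \<Rightarrow> 'a) \<Rightarrow> ('a \<Rightarrow> 'a) \<Rightarrow> ('a \<Rightarrow> 'a \<Rightarrow> 'a) \<Rightarrow> ('a \<Rightarrow> nat \<Rightarrow> nat)
     \<Rightarrow> (nat \<Rightarrow> nat) \<Rightarrow> 'a \<Rightarrow> 'a" where
  "dual_r Lam r s cmp d p x = seg Lam r s cmp d x (\<lambda>i. 0) p"

definition dual_s ::
  "'a set \<Rightarrow> ('a \<Rightarrow> 'a) \<Rightarrow> ('a \<Rightarrow> 'a) \<Rightarrow> ('a \<Rightarrow> 'a \<Rightarrow> 'a) \<Rightarrow> ('a \<Rightarrow> nat \<Rightarrow> nat)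
     \<Rightarrow> (nat \<Rightarrow> nat) \<Rightarrow> 'a \<Rightarrow> 'a" where
  "dual_s Lam r s cmp d p x = seg Lam r s cmp d x (\<lambda>i. d x i - p i) (d x)"

definition dual_d :: "('a \<Rightarrow> nat \<Rightarrow> nat) \<Rightarrow> (nat \<Rightarrow> nat) \<Rightarrow> 'a \<Rightarrow> nat \<Rightarrow> nat" where
  "dual_d d p x = (\<lambda>i. d x i - p i)"

end

theory Submission
  imports Defs
begin

text \<open>Factor a path x of degree p + n of the dual graph p\<Lambda> as x = v b = c w with d v = d w = p;
  then v = x(0,p) and w = x(n,p+n) are its range and source in p\<Lambda>. Factoring further
  w = w1 w2 with d w2 = n, the path x = (c w1) w2 has a second factorisation of
  degrees (p, n), so uniqueness of factorisations gives x = v w2 = v w(p-n,p), which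
  depends only on v, w and n.\<close>

lemma
  fixes p q :: "'a \<Rightarrow> nat"
  assumes "p \<le> q"
  shows le_fun_eq_add_diff: "q = (\<lambda>i. p i + (q i - p i))"
    and le_fun_eq_diff_add: "q = (\<lambda>i. (q i - p i) + p i)"
  using assms by (auto simp: le_fun_def)

locale k_graph =
  fixes k :: nat and Lam :: "'a set" and r s :: "'a \<Rightarrow> 'a" and cmp :: "'a \<Rightarrow> 'a \<Rightarrow> 'a"
    and d :: "'a \<Rightarrow> nat \<Rightarrow> nat"
  assumes kgraph: "kgraph k Lam r s cmp d"
begin

lemma r_in: "x \<in> Lam \<Longrightarrow> r x \<in> Lam"
  and s_in: "x \<in> Lam \<Longrightarrow> s x \<in> Lam"
  using kgraph by (simp_all add: kgraph_def)

lemma s_r: "x \<in> Lam \<Longrightarrow> s (r x) = r x"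
  and r_s: "x \<in> Lam \<Longrightarrow> r (s x) = s x"
  using kgraph by (simp_all add: kgraph_def)

lemma cmp_r_left: "x \<in> Lam \<Longrightarrow> cmp (r x) x = x"
  and cmp_s_right: "x \<in> Lam \<Longrightarrow> cmp x (s x) = x"
  using kgraph by (simp_all add: kgraph_def)

lemma cmp_in: "\<lbrakk>x \<in> Lam; y \<in> Lam; s x = r y\<rbrakk> \<Longrightarrow> cmp x y \<in> Lam"
  and r_cmp: "\<lbrakk>x \<in> Lam; y \<in> Lam; s x = r y\<rbrakk> \<Longrightarrow> r (cmp x y) = r x"
  and s_cmp: "\<lbrakk>x \<in> Lam; y \<in> Lam; s x = r y\<rbrakk> \<Longrightarrow> s (cmp x y) = s y"
  using kgraph by (simp_all add: kgraph_def)

lemma cmp_assoc: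
  "\<lbrakk>x \<in> Lam; y \<in> Lam; z \<in> Lam; s x = r y; s y = r z\<rbrakk> \<Longrightarrow> cmp (cmp x y) z = cmp x (cmp y z)"
  using kgraph by (simp add: kgraph_def)

lemma d_r: "x \<in> Lam \<Longrightarrow> d (r x) = (\<lambda>i. 0)"
  and d_s: "x \<in> Lam \<Longrightarrow> d (s x) = (\<lambda>i. 0)"
  using kgraph by (simp_all add: kgraph_def)

lemma d_cmp: "\<lbrakk>x \<in> Lam; y \<in> Lam; s x = r y\<rbrakk> \<Longrightarrow> d (cmp x y) = (\<lambda>i. d x i + d y i)"
  using kgraph by (simp add: kgraph_def)

lemma factorisation_ex1:
  assumes "x \<in> Lam" and "d x = (\<lambda>i. m i + n i)"
  shows "\<exists>!(mu, nu). mu \<in> Lam \<and> nu \<in> Lam \<and> d mu = m \<and> d nu = n \<and> s mu = r nu \<and> x = cmp mu nu"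
proof -
  have "\<forall>x\<in>Lam. \<forall>m n. d x = (\<lambda>i. m i + n i) \<longrightarrow>
      (\<exists>!(mu, nu). mu \<in> Lam \<and> nu \<in> Lam \<and> d mu = m \<and> d nu = n \<and> s mu = r nu \<and> x = cmp mu nu)"
    using kgraph unfolding kgraph_def by (elim conjE) assumption
  with assms show ?thesis by blast
qed

lemma factorisation_exists:
  assumes "x \<in> Lam" and "d x = (\<lambda>i. m i + n i)"
  obtains mu nu where "mu \<in> Lam" "nu \<in> Lam" "d mu = m" "d nu = n" "s mu = r nu" "x = cmp mu nu"
  using factorisation_ex1[OF assms] by auto

lemma factorisation_unique:
  assumes "mu \<in> Lam" "nu \<in> Lam" "s mu = r nu" "mu' \<in> Lam" "nu' \<in> Lam" "s mu' = r nu'"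
    and "d mu = d mu'" "d nu = d nu'" and "cmp mu nu = cmp mu' nu'"
  shows "mu = mu'" and "nu = nu'"
proof -
  have "\<exists>!(a, b). a \<in> Lam \<and> b \<in> Lam \<and> d a = d mu \<and> d b = d nu \<and> s a = r b \<and>
      cmp mu nu = cmp a b"
    by (rule factorisation_ex1) (use assms(1-3) in \<open>simp_all add: cmp_in d_cmp\<close>)
  then have "(mu, nu) = (mu', nu')"
    by (rule Uniq_D[OF ex1_iff_ex_Uniq[THEN iffD1, THEN conjunct2]]) (use assms in simp)+
  then show "mu = mu'" and "nu = nu'" by simp_all
qed

lemma seg_eqI:
  assumes a: "a \<in> Lam" "s a = r nu" "d a = l"
    and nu: "nu \<in> Lam" "d nu = (\<lambda>i. m i - l i)"
    and b: "b \<in> Lam" "s nu = r b" "d b = (\<lambda>i. d x i - m i)"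
    and x: "x = cmp a (cmp nu b)"
  shows "seg Lam r s cmp d x l m = nu"
  unfolding seg_def
proof (rule the_equality)
  fix nu'
  assume "nu' \<in> Lam \<and> d nu' = (\<lambda>i. m i - l i) \<and>
     (\<exists>a b. a \<in> Lam \<and> b \<in> Lam \<and> d a = l \<and> d b = (\<lambda>i. d x i - m i) \<and>
            s a = r nu' \<and> s nu' = r b \<and> x = cmp a (cmp nu' b))"
  then obtain a' b' where nu': "nu' \<in> Lam" "d nu' = d nu"
    and a': "a' \<in> Lam" "s a' = r nu'" "d a' = d a"
    and b': "b' \<in> Lam" "s nu' = r b'" "d b' = d b"
    and x': "x = cmp a' (cmp nu' b')"
    using a nu b by auto
  have "cmp nu' b' = cmp nu b"
  proof (rule factorisation_unique(2)[of a' _ a])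
    show "d (cmp nu' b') = d (cmp nu b)"
      using nu' b' nu b by (simp add: d_cmp)
  qed (use a a' nu nu' b b' x x' in \<open>simp_all add: cmp_in r_cmp\<close>)
  with nu'(1) b'(1,2) nu(1) b(1,2) nu'(2) b'(3) show "nu' = nu"
    by (rule factorisation_unique(1))
qed (use a nu b x in blast)

lemma seg_cmp_left:
  assumes "a \<in> Lam" "b \<in> Lam" "s a = r b"
  shows "seg Lam r s cmp d (cmp a b) (\<lambda>i. 0) (d a) = a"
proof (rule seg_eqI)
  show "cmp a b = cmp (r a) (cmp a b)"
    using assms by (metis cmp_in r_cmp cmp_r_left)
qed (use assms in \<open>simp_all add: r_in s_r d_r d_cmp\<close>)

lemma seg_cmp_right:
  assumes "a \<in> Lam" "b \<in> Lam" "s a = r b"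
  shows "seg Lam r s cmp d (cmp a b) (d a) (d (cmp a b)) = b"
proof (rule seg_eqI)
  show "cmp a b = cmp a (cmp b (s b))"
    using assms cmp_s_right by simp
qed (use assms in \<open>simp_all add: s_in r_s d_s d_cmp\<close>)

lemma dual_r_cmp:
  assumes "v \<in> Lam" "b \<in> Lam" "s v = r b"
  shows "dual_r Lam r s cmp d (d v) (cmp v b) = v"
  unfolding dual_r_def using assms by (rule seg_cmp_left)

lemma dual_s_cmp:
  assumes "c \<in> Lam" "w \<in> Lam" "s c = r w"
  shows "dual_s Lam r s cmp d (d w) (cmp c w) = w"
proof -
  have "(\<lambda>i. d (cmp c w) i - d w i) = d c"
    using assms by (simp add: d_cmp)
  then show ?thesis
    unfolding dual_s_def using seg_cmp_right[OF assms] by simp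
qed

lemma dual_path_eq_cmp_seg:
  assumes x: "x \<in> dual_paths Lam d p" and "n \<le> p" and n: "dual_d d p x = n"
  shows "x = cmp (dual_r Lam r s cmp d p x)
                 (seg Lam r s cmp d (dual_s Lam r s cmp d p x) (\<lambda>i. p i - n i) p)"
proof -
  from x have "x \<in> Lam" and "p \<le> d x"
    unfolding dual_paths_def by auto
  have dx: "d x = (\<lambda>i. p i + n i)"
    using le_fun_eq_add_diff[OF \<open>p \<le> d x\<close>] unfolding n[unfolded dual_d_def, symmetric] .
  have dx': "d x = (\<lambda>i. n i + p i)"
    using le_fun_eq_diff_add[OF \<open>p \<le> d x\<close>] unfolding n[unfolded dual_d_def, symmetric] .
  obtain v b where v: "v \<in> Lam" "d v = p" and b: "b \<in> Lam" "d b = n" "s v = r b"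
    and xvb: "x = cmp v b"
    using factorisation_exists[OF \<open>x \<in> Lam\<close> dx] .
  obtain c w where c: "c \<in> Lam" "d c = n" and w: "w \<in> Lam" "d w = p" "s c = r w"
    and xcw: "x = cmp c w"
    using factorisation_exists[OF \<open>x \<in> Lam\<close> dx'] .
  have dw: "d w = (\<lambda>i. (p i - n i) + n i)"
    unfolding w(2) using \<open>n \<le> p\<close> by (rule le_fun_eq_diff_add)
  obtain w1 w2 where w1: "w1 \<in> Lam" "d w1 = (\<lambda>i. p i - n i)"
    and w2: "w2 \<in> Lam" "d w2 = n" "s w1 = r w2" and w12: "w = cmp w1 w2"
    using factorisation_exists[OF \<open>w \<in> Lam\<close> dw] .
  have "s c = r w1"
    using w(3) w12 w1 w2 r_cmp by simp
  have "dual_r Lam r s cmp d p x = v"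
    using dual_r_cmp[OF v(1) b(1,3)] v(2) xvb by simp
  moreover have "dual_s Lam r s cmp d p x = w"
    using dual_s_cmp[OF c(1) w(1,3)] w(2) xcw by simp
  moreover have "seg Lam r s cmp d w (\<lambda>i. p i - n i) p = w2"
    using seg_cmp_right[OF w1(1) w2(1,3)] w12 w1(2) w(2) by simp
  moreover have "b = w2"
  proof (rule factorisation_unique(2)[of v b "cmp c w1" w2])
    show "cmp v b = cmp (cmp c w1) w2"
      using xvb xcw w12 cmp_assoc[OF c(1) w1(1) w2(1) \<open>s c = r w1\<close> w2(3)] by simp
    show "d v = d (cmp c w1)"
      unfolding d_cmp[OF c(1) w1(1) \<open>s c = r w1\<close>] v(2) c(2) w1(2)
      using \<open>n \<le> p\<close> by (rule le_fun_eq_add_diff)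
  qed (use v b c w1 w2 \<open>s c = r w1\<close> in \<open>simp_all add: cmp_in s_cmp\<close>)
  ultimately show ?thesis
    using xvb by simp
qed

end

theorem lemma3p7:
  fixes Lam :: "'a set" and r s :: "'a \<Rightarrow> 'a" and cmp :: "'a \<Rightarrow> 'a \<Rightarrow> 'a"
    and d :: "'a \<Rightarrow> nat \<Rightarrow> nat" and k :: nat and p n :: "nat \<Rightarrow> nat" and v w :: 'a
  assumes "kgraph k Lam r s cmp d"
    and "in_Nk k p" and "in_Nk k n" and "n \<le> p"
    and "v \<in> dual_vertices Lam d p" and "w \<in> dual_vertices Lam d p"
  shows "\<forall>x\<in>dual_paths Lam d p. \<forall>y\<in>dual_paths Lam d p.
            dual_d d p x = n \<and> dual_r Lam r s cmp d p x = v \<and> dual_s Lam r s cmp d p x = w \<and>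
            dual_d d p y = n \<and> dual_r Lam r s cmp d p y = v \<and> dual_s Lam r s cmp d p y = w
            \<longrightarrow> x = y"
proof -
  interpret k_graph k Lam r s cmp d by (rule k_graph.intro) fact
  show ?thesis
    using dual_path_eq_cmp_seg[OF _ \<open>n \<le> p\<close>] by metis
qed

end
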